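(* Let $n,m\ge1$, $r>0$, let $\varphi_1,\dots,\varphi_n:\mathbb{R}\to[0,\infty)$ be nonnegative functions and $x_1,\dots,x_m\in\mathbb{R}$ such that for each $j$ there is $i$ with $\varphi_i(x_j)>0$. Set $v^1_i=\sqrt{r/n}$ for $i=1,\dots,n$. For $k\ge1$, given $v^k\in[0,\infty)^n$, let $u^k\in[0,\infty)^n$ with $\sum_i(u^k_i)^2=r$ be a point at which $\widehat l^{\,k}(u)=\prod_{j=1}^m\big(\sum_{i=1}^n u_iv^k_i\varphi_i(x_j)\big)$ attains its maximum over the sphere $\{u\in\mathbb{R}^n:\sum_iu_i^2=r\}$; let $\overline\theta^{k+1}>0$ satisfy $(\overline\theta^{k+1})^2\sum_i u^k_iv^k_i=r$ and set $v^{k+1}_i=\overline\theta^{k+1}\sqrt{u^k_iv^k_i}$. Let $P^k=\sum_{i=1}^n u^k_iv^k_i$. Then $\lim_{k\to\infty}P^k=r$; in particular, for every $\varepsilon>0$ there is $k$ with $P^k+\varepsilon\ge r$, so the procedure that stops at the first $k$ with $\sum_i u^k_iv^k_i+\varepsilon\ge r$ terminates after finitely many steps. *)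

theory Defs
  imports Complex_Main
begin

definition lhat :: "nat \<Rightarrow> nat \<Rightarrow> (nat \<Rightarrow> real \<Rightarrow> real) \<Rightarrow> (nat \<Rightarrow> real)
    \<Rightarrow> (nat \<Rightarrow> real) \<Rightarrow> (nat \<Rightarrow> real) \<Rightarrow> real" where
  "lhat n m \<phi> x v w = (\<Prod>j<m. \<Sum>i<n. w i * v i * \<phi> i (x j))"

end

theory Submission
  imports Defs
begin

text \<open>Follow the potential \<open>a k = lhat (v k) (v k) = (\<Prod>j. \<Sum>i. (v k i)\<^sup>2 * \<phi> i (x j))\<close>.
  The update gives \<open>(v (k+1) i)\<^sup>2 = (r / P k) * u k i * v k i\<close>, hence
  \<open>a (k+1) = (r / P k)^m * lhat (v k) (u k)\<close>; and since \<open>v k\<close> lies on the sphere over which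
  \<open>u k\<close> maximises, \<open>lhat (v k) (u k) \<ge> a k\<close>. By AM-GM \<open>P k \<le> r\<close>, so
  \<open>a (k+1) \<ge> (r / P k) * a k \<ge> a k\<close>. The potential is bounded because \<open>v k\<close> stays on the
  sphere, so it increases to a positive limit, and \<open>1 \<le> r / P k \<le> a (k+1) / a k \<longrightarrow> 1\<close>.\<close>

lemma sum_mult_le_half_sum_squares:
  fixes f g :: "'a \<Rightarrow> real"
  shows "(\<Sum>i\<in>A. f i * g i) \<le> ((\<Sum>i\<in>A. (f i)\<^sup>2) + (\<Sum>i\<in>A. (g i)\<^sup>2)) / 2"
proof -
  have "f i * g i \<le> ((f i)\<^sup>2 + (g i)\<^sup>2) / 2" for i
    using sum_squares_bound[of "f i" "g i"] by (simp add: power2_eq_square)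
  then have "(\<Sum>i\<in>A. f i * g i) \<le> (\<Sum>i\<in>A. ((f i)\<^sup>2 + (g i)\<^sup>2) / 2)"
    by (rule sum_mono)
  then show ?thesis
    by (simp add: sum_divide_distrib[symmetric] sum.distrib)
qed

lemma LIMSEQ_of_bounded_ratio_growth:
  fixes b c :: "nat \<Rightarrow> real"
  assumes b0: "b 0 > 0" and bounded: "\<And>k. b k \<le> B"
    and c_pos: "\<And>k. c k > 0" and c_le: "\<And>k. c k \<le> r"
    and growth: "\<And>k. r * b k \<le> c k * b (Suc k)"
  shows "c \<longlonglongrightarrow> r"
proof -
  have r_pos: "r > 0" using c_pos c_le by (meson order_less_le_trans)
  have b_pos: "b k > 0" for k
  proof (induction k)
    case (Suc k)
    then have "0 < c k * b (Suc k)"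
      using growth[of k] r_pos by (meson mult_pos_pos order_less_le_trans)
    then show ?case using c_pos[of k] by (simp add: zero_less_mult_iff)
  qed (fact b0)
  have "incseq b"
  proof (rule incseq_SucI)
    fix k
    have "r * b k \<le> r * b (Suc k)"
      using growth[of k] mult_right_mono[OF c_le less_imp_le[OF b_pos]] by (rule order_trans)
    then show "b k \<le> b (Suc k)" using r_pos by simp
  qed
  then obtain L where L: "b \<longlonglongrightarrow> L" "\<And>k. b k \<le> L"
    using incseq_convergent[of b B] bounded by auto
  have "L > 0" using L(2)[of 0] b0 by simp
  have "(\<lambda>k. r * b k / b (Suc k)) \<longlonglongrightarrow> r * L / L"
    using L(1) LIMSEQ_Suc[OF L(1)] \<open>L > 0\<close> by (intro tendsto_intros) auto
  then have lower_tendsto: "(\<lambda>k. r * b k / b (Suc k)) \<longlonglongrightarrow> r"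
    using \<open>L > 0\<close> by simp
  have lower: "r * b k / b (Suc k) \<le> c k" for k
    using growth[of k] b_pos[of "Suc k"] by (simp add: divide_le_eq)
  show ?thesis
    by (rule tendsto_sandwich[OF _ _ lower_tendsto tendsto_const]) (use lower c_le in auto)
qed

lemma lhat_nonneg:
  assumes "\<And>i t. i < n \<Longrightarrow> \<phi> i t \<ge> 0"
    and "\<And>i. i < n \<Longrightarrow> v i \<ge> 0" and "\<And>i. i < n \<Longrightarrow> w i \<ge> 0"
  shows "lhat n m \<phi> x v w \<ge> 0"
  unfolding lhat_def using assms by (intro prod_nonneg sum_nonneg) auto

lemma lhat_self_pos:
  assumes "\<And>i t. i < n \<Longrightarrow> \<phi> i t \<ge> 0"
    and "\<And>j. j < m \<Longrightarrow> \<exists>i<n. \<phi> i (x j) > 0"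
    and v_pos: "\<And>i. i < n \<Longrightarrow> v i > 0"
  shows "lhat n m \<phi> x v v > 0"
  unfolding lhat_def
proof (rule prod_pos)
  fix j assume "j \<in> {..<m}"
  then obtain i where "i < n" "\<phi> i (x j) > 0" using assms(2) by auto
  then show "0 < (\<Sum>i<n. v i * v i * \<phi> i (x j))"
    using assms(1) v_pos by (intro sum_pos2[of _ i]) (auto simp: less_imp_le)
qed

lemma lhat_self_le:
  assumes "\<And>i t. i < n \<Longrightarrow> \<phi> i t \<ge> 0" and "(\<Sum>i<n. (v i)\<^sup>2) = r"
  shows "lhat n m \<phi> x v v \<le> (\<Prod>j<m. \<Sum>i<n. r * \<phi> i (x j))"
  unfolding lhat_def
proof (intro prod_mono conjI sum_nonneg sum_mono)
  fix j i assume "i \<in> {..<n}"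
  then have "(v i)\<^sup>2 \<le> r"
    using assms(2) member_le_sum[of i "{..<n}" "\<lambda>i. (v i)\<^sup>2"] by simp
  with \<open>i \<in> {..<n}\<close> show "v i * v i * \<phi> i (x j) \<le> r * \<phi> i (x j)"
    using assms(1) by (intro mult_right_mono) (auto simp: power2_eq_square)
qed (use assms(1) in auto)

lemma lhat_self_rescale:
  assumes "\<And>i. i < n \<Longrightarrow> w i * w i = c * (u i * v i)"
  shows "lhat n m \<phi> x w w = c ^ m * lhat n m \<phi> x v u"
proof -
  have "lhat n m \<phi> x w w = (\<Prod>j<m. c * (\<Sum>i<n. u i * v i * \<phi> i (x j)))"
    unfolding lhat_def using assms by (simp add: sum_distrib_left mult.assoc)
  then show ?thesis
    by (simp add: lhat_def prod.distrib)
qed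

locale lhat_iteration =
  fixes n m :: nat and r :: real
    and \<phi> :: "nat \<Rightarrow> real \<Rightarrow> real" and x :: "nat \<Rightarrow> real"
    and u v :: "nat \<Rightarrow> nat \<Rightarrow> real" and \<theta> :: "nat \<Rightarrow> real"
  assumes n_pos: "n \<ge> 1" and m_pos: "m \<ge> 1" and r_pos: "r > 0"
    and phi_nonneg: "\<And>i t. i < n \<Longrightarrow> \<phi> i t \<ge> 0"
    and data: "\<And>j. j < m \<Longrightarrow> \<exists>i<n. \<phi> i (x j) > 0"
    and v1: "\<And>i. i < n \<Longrightarrow> v 1 i = sqrt (r / real n)"
    and u_nonneg: "\<And>k i. k \<ge> 1 \<Longrightarrow> i < n \<Longrightarrow> u k i \<ge> 0"
    and u_sphere: "\<And>k. k \<ge> 1 \<Longrightarrow> (\<Sum>i<n. (u k i)\<^sup>2) = r"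
    and u_max: "\<And>k w. k \<ge> 1 \<Longrightarrow> (\<Sum>i<n. (w i)\<^sup>2) = r \<Longrightarrow>
                  lhat n m \<phi> x (v k) w \<le> lhat n m \<phi> x (v k) (u k)"
    and theta_pos: "\<And>k. k \<ge> 1 \<Longrightarrow> \<theta> (k + 1) > 0"
    and theta_eq: "\<And>k. k \<ge> 1 \<Longrightarrow> (\<theta> (k + 1))\<^sup>2 * (\<Sum>i<n. u k i * v k i) = r"
    and v_step: "\<And>k i. k \<ge> 1 \<Longrightarrow> i < n \<Longrightarrow> v (k + 1) i = \<theta> (k + 1) * sqrt (u k i * v k i)"
begin

definition P :: "nat \<Rightarrow> real" where
  "P k = (\<Sum>i<n. u k i * v k i)"

definition potential :: "nat \<Rightarrow> real" where
  "potential k = lhat n m \<phi> x (v k) (v k)"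

lemma v_nonneg_and_sphere:
  assumes "k \<ge> 1"
  shows "(\<forall>i<n. v k i \<ge> 0) \<and> (\<Sum>i<n. (v k i)\<^sup>2) = r"
  using assms
proof (induction k rule: nat_induct_at_least)
  case base
  have "(\<Sum>i<n. (v 1 i)\<^sup>2) = (\<Sum>i<n. r / real n)"
    using v1 r_pos by (intro sum.cong) auto
  also have "\<dots> = r" using n_pos by simp
  finally show ?case using v1 r_pos by simp
next
  case (Suc k)
  have uv_nonneg: "u k i * v k i \<ge> 0" if "i < n" for i
    using Suc u_nonneg that by simp
  have "(\<Sum>i<n. (v (Suc k) i)\<^sup>2) = (\<Sum>i<n. (\<theta> (k + 1))\<^sup>2 * (u k i * v k i))"
    using v_step Suc uv_nonneg by (intro sum.cong) (auto simp: power_mult_distrib)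
  also have "\<dots> = r" using theta_eq Suc by (simp add: sum_distrib_left)
  finally show ?case using v_step[of k] Suc theta_pos[of k] uv_nonneg by (simp add: less_imp_le)
qed

lemma v_nonneg: "k \<ge> 1 \<Longrightarrow> i < n \<Longrightarrow> v k i \<ge> 0"
  using v_nonneg_and_sphere by blast

lemma v_sphere: "k \<ge> 1 \<Longrightarrow> (\<Sum>i<n. (v k i)\<^sup>2) = r"
  using v_nonneg_and_sphere by blast

lemma P_pos: "k \<ge> 1 \<Longrightarrow> P k > 0"
  using theta_eq[of k] r_pos v_nonneg u_nonneg unfolding P_def
  by (fastforce intro: sum_nonneg simp: order_less_le)

lemma P_le: "k \<ge> 1 \<Longrightarrow> P k \<le> r"
  using sum_mult_le_half_sum_squares[of "u k" "v k" "{..<n}"] u_sphere v_sphere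
  unfolding P_def by simp

lemma theta_sq: "k \<ge> 1 \<Longrightarrow> (\<theta> (k + 1))\<^sup>2 = r / P k"
  using theta_eq[of k] P_pos[of k] unfolding P_def by (simp add: field_simps)

lemma potential_Suc:
  assumes "k \<ge> 1"
  shows "potential (k + 1) = (r / P k) ^ m * lhat n m \<phi> x (v k) (u k)"
  unfolding potential_def
proof (rule lhat_self_rescale)
  fix i assume "i < n"
  have "v (k + 1) i * v (k + 1) i = (\<theta> (k + 1))\<^sup>2 * (sqrt (u k i * v k i))\<^sup>2"
    using v_step[OF assms \<open>i < n\<close>] by (simp add: power2_eq_square mult_ac)
  also have "\<dots> = r / P k * (u k i * v k i)"
    using theta_sq[OF assms] assms \<open>i < n\<close> u_nonneg v_nonneg by simp
  finally show "v (k + 1) i * v (k + 1) i = r / P k * (u k i * v k i)" .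
qed

lemma potential_growth:
  assumes "k \<ge> 1"
  shows "r * potential k \<le> P k * potential (k + 1)"
proof -
  have ratio_ge_1: "r / P k \<ge> 1" using P_le[OF assms] P_pos[OF assms] by simp
  have nonneg: "potential k \<ge> 0"
    unfolding potential_def using assms phi_nonneg v_nonneg by (intro lhat_nonneg) auto
  have "(r / P k) * potential k \<le> (r / P k) ^ m * potential k"
    using ratio_ge_1 m_pos nonneg power_increasing[of 1 m "r / P k"]
    by (intro mult_right_mono) auto
  also have "\<dots> \<le> (r / P k) ^ m * lhat n m \<phi> x (v k) (u k)"
    unfolding potential_def using u_max[OF assms v_sphere[OF assms]] ratio_ge_1
    by (intro mult_left_mono) auto
  also have "\<dots> = potential (k + 1)" using potential_Suc[OF assms] by simp
  finally show ?thesis using P_pos[OF assms] by (simp add: field_simps)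
qed

lemma potential_bounded: "k \<ge> 1 \<Longrightarrow> potential k \<le> (\<Prod>j<m. \<Sum>i<n. r * \<phi> i (x j))"
  unfolding potential_def using phi_nonneg v_sphere by (intro lhat_self_le) auto

lemma potential_1_pos: "potential 1 > 0"
  unfolding potential_def using phi_nonneg data v1 r_pos n_pos by (intro lhat_self_pos) auto

lemma P_tendsto: "P \<longlonglongrightarrow> r"
proof -
  have "(\<lambda>k. P (Suc k)) \<longlonglongrightarrow> r"
    using potential_1_pos potential_bounded P_pos P_le potential_growth
    by (intro LIMSEQ_of_bounded_ratio_growth[where b = "\<lambda>k. potential (Suc k)"]) auto
  then show ?thesis by (rule LIMSEQ_imp_Suc)
qed

end

theorem lemma7:
  fixes n m :: nat and r :: real
    and \<phi> :: "nat \<Rightarrow> real \<Rightarrow> real" and x :: "nat \<Rightarrow> real"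
    and u v :: "nat \<Rightarrow> nat \<Rightarrow> real" and \<theta> :: "nat \<Rightarrow> real"
  assumes "n \<ge> 1" and "m \<ge> 1" and "r > 0"
    and phi_nonneg: "\<And>i t. i < n \<Longrightarrow> \<phi> i t \<ge> 0"
    and data: "\<And>j. j < m \<Longrightarrow> \<exists>i<n. \<phi> i (x j) > 0"
    and v1: "\<And>i. i < n \<Longrightarrow> v 1 i = sqrt (r / real n)"
    and u_nonneg: "\<And>k i. k \<ge> 1 \<Longrightarrow> i < n \<Longrightarrow> u k i \<ge> 0"
    and u_sphere: "\<And>k. k \<ge> 1 \<Longrightarrow> (\<Sum>i<n. (u k i)\<^sup>2) = r"
    and u_max: "\<And>k w. k \<ge> 1 \<Longrightarrow> (\<Sum>i<n. (w i)\<^sup>2) = r \<Longrightarrow>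
                  lhat n m \<phi> x (v k) w \<le> lhat n m \<phi> x (v k) (u k)"
    and theta_pos: "\<And>k. k \<ge> 1 \<Longrightarrow> \<theta> (k + 1) > 0"
    and theta_eq: "\<And>k. k \<ge> 1 \<Longrightarrow> (\<theta> (k + 1))\<^sup>2 * (\<Sum>i<n. u k i * v k i) = r"
    and v_step: "\<And>k i. k \<ge> 1 \<Longrightarrow> i < n \<Longrightarrow> v (k + 1) i = \<theta> (k + 1) * sqrt (u k i * v k i)"
  shows "((\<lambda>k. \<Sum>i<n. u k i * v k i) \<longlonglongrightarrow> r)
       \<and> (\<forall>\<epsilon>>0. \<exists>k\<ge>1. (\<Sum>i<n. u k i * v k i) + \<epsilon> \<ge> r)"
proof -
  interpret lhat_iteration n m r \<phi> x u v \<theta>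
    using assms by unfold_locales
  have "\<exists>k\<ge>1. P k + \<epsilon> \<ge> r" if "\<epsilon> > 0" for \<epsilon>
  proof -
    have "\<forall>\<^sub>F k in sequentially. k \<ge> 1 \<and> dist (P k) r < \<epsilon>"
      using eventually_ge_at_top tendstoD[OF P_tendsto that] by (rule eventually_conj)
    then obtain k where "k \<ge> 1" "dist (P k) r < \<epsilon>"
      using eventually_sequentially by auto
    then show ?thesis by (auto simp: dist_real_def)
  qed
  then show ?thesis using P_tendsto unfolding P_def by simp
qed

end
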